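(* Let $n=5$, let $x_1<x_2<\cdots<x_5$ be fixed real numbers and $Y_i=\beta_0+\beta_1x_i+\varepsilon_i$ ($i=1,\dots,5$) with $\varepsilon_1,\dots,\varepsilon_5$ i.i.d. with a continuous distribution. Let $s_1<s_2<\cdots<s_{10}$ be the ten slopes $S_{ij}=(Y_i-Y_j)/(x_i-x_j)$, $i<j$, sorted increasingly, and let $w_1<w_2<\cdots<w_{55}$ be the $55$ Walsh averages $(s_i+s_j)/2$, $1\le i\le j\le 10$, sorted increasingly. Then: (a) $s_2\le w_9$ if and only if $2s_2\le s_1+s_9$; (b) $w_{47}\le s_9$ if and only if $s_2+s_{10}\le 2s_9$.
   Context: Ties among the slopes and among the Walsh averages occur with probability zero and are ignored, i.e. all slopes are assumed pairwise distinct and all Walsh averages pairwise distinct. *)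

theory Defs
  imports Complex_Main
begin

definition slopes :: "(nat \<Rightarrow> real) \<Rightarrow> (nat \<Rightarrow> real) \<Rightarrow> real list" where
  "slopes x Y = [(Y i - Y j) / (x i - x j). i \<leftarrow> [1..<6], j \<leftarrow> [Suc i..<6]]"

definition sl :: "(nat \<Rightarrow> real) \<Rightarrow> (nat \<Rightarrow> real) \<Rightarrow> nat \<Rightarrow> real" where
  "sl x Y k = sort (slopes x Y) ! (k - 1)"

definition walsh :: "(nat \<Rightarrow> real) \<Rightarrow> (nat \<Rightarrow> real) \<Rightarrow> real list" where
  "walsh x Y = [(sl x Y i + sl x Y j) / 2. i \<leftarrow> [1..<11], j \<leftarrow> [i..<11]]"

definition wa :: "(nat \<Rightarrow> real) \<Rightarrow> (nat \<Rightarrow> real) \<Rightarrow> nat \<Rightarrow> real" where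
  "wa x Y k = sort (walsh x Y) ! (k - 1)"

end

theory Submission
  imports Defs
begin

text \<open>Both s_2 = (s_2 + s_2)/2 and s_9 are themselves Walsh averages, so comparing them
  with w_k amounts to counting the Walsh averages below them. The only averages below s_2
  are the (s_1 + s_j)/2 with s_j < 2 s_2 - s_1, and there are at most 8 of them iff
  s_9 \<ge> 2 s_2 - s_1. The averages not exceeding s_9 are the 45 averages of s_1, ..., s_9
  together with the (s_i + s_10)/2 with s_i \<le> 2 s_9 - s_10, and there are at least 47 of
  them iff s_2 \<le> 2 s_9 - s_10.\<close>

definition walsh_averages :: "real list \<Rightarrow> real list" where
  "walsh_averages s = [(s ! i + s ! j) / 2. i \<leftarrow> [0..<length s], j \<leftarrow> [i..<length s]]"

lemma sorted_nth_iff_less_length_filter: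
  fixes ys :: "'a::linorder list"
  assumes "sorted ys" "k < length ys" and down_closed: "\<And>a b. a \<le> b \<Longrightarrow> P b \<Longrightarrow> P a"
  shows "P (ys ! k) \<longleftrightarrow> k < length (filter P ys)"
proof
  assume "P (ys ! k)"
  then have "{..k} \<subseteq> {i. i < length ys \<and> P (ys ! i)}"
    using assms by (auto intro: down_closed sorted_nth_mono)
  then have "card {..k} \<le> card {i. i < length ys \<and> P (ys ! i)}"
    by (intro card_mono) auto
  then show "k < length (filter P ys)"
    by (simp add: length_filter_conv_card)
next
  assume "k < length (filter P ys)"
  show "P (ys ! k)"
  proof (rule ccontr)
    assume "\<not> P (ys ! k)"
    have "{i. i < length ys \<and> P (ys ! i)} \<subseteq> {..<k}"
    proof safe
      fix i assume "i < length ys" "P (ys ! i)"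
      show "i < k"
      proof (rule ccontr)
        assume "\<not> i < k"
        then have "ys ! k \<le> ys ! i"
          using assms(1) \<open>i < length ys\<close> by (simp add: sorted_nth_mono)
        with \<open>P (ys ! i)\<close> \<open>\<not> P (ys ! k)\<close> show False
          using down_closed by blast
      qed
    qed
    then have "card {i. i < length ys \<and> P (ys ! i)} \<le> card {..<k}"
      by (intro card_mono) auto
    with \<open>k < length (filter P ys)\<close> show False
      by (simp add: length_filter_conv_card)
  qed
qed

lemma length_eq_10E:
  assumes "length s = 10"
  obtains a0 a1 a2 a3 a4 a5 a6 a7 a8 a9 where "s = [a0, a1, a2, a3, a4, a5, a6, a7, a8, a9]"
  using assms by (simp add: numeral_eq_Suc length_Suc_conv) blast

lemma walsh_count_below_second:
  fixes s :: "real list"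
  assumes "sorted_wrt (<) s" "length s = 10"
  shows "length (filter (\<lambda>u. u < s ! 1) (walsh_averages s)) \<le> 8 \<longleftrightarrow> 2 * s ! 1 \<le> s ! 0 + s ! 8"
proof -
  obtain a0 a1 a2 a3 a4 a5 a6 a7 a8 a9 where "s = [a0, a1, a2, a3, a4, a5, a6, a7, a8, a9]"
    using assms(2) by (rule length_eq_10E)
  with assms(1) show ?thesis
    by (simp add: walsh_averages_def upt_rec field_simps)
qed

lemma walsh_count_atmost_ninth:
  fixes s :: "real list"
  assumes "sorted_wrt (<) s" "length s = 10"
  shows "46 < length (filter (\<lambda>u. u \<le> s ! 8) (walsh_averages s)) \<longleftrightarrow> s ! 1 + s ! 9 \<le> 2 * s ! 8"
proof -
  obtain a0 a1 a2 a3 a4 a5 a6 a7 a8 a9 where s: "s = [a0, a1, a2, a3, a4, a5, a6, a7, a8, a9]"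
    using assms(2) by (rule length_eq_10E)
  define c where "c = 2 * a8 - a9"
  \<comment> \<open>the averages (a_i + a9)/2 not exceeding a8 are those with a_i \<le> c\<close>
  have "c < a0 \<or> (a0 \<le> c \<and> c < a1) \<or> (a1 \<le> c \<and> c < a2) \<or> (a2 \<le> c \<and> c < a3)
    \<or> (a3 \<le> c \<and> c < a4) \<or> (a4 \<le> c \<and> c < a5) \<or> (a5 \<le> c \<and> c < a6)
    \<or> (a6 \<le> c \<and> c < a7) \<or> a7 \<le> c"
    by linarith
  with assms(1) show ?thesis
    unfolding s c_def by (elim disjE) (simp_all add: walsh_averages_def upt_rec field_simps)
qed

lemma length_slopes: "length (slopes x Y) = 10"
  by (simp add: slopes_def upt_rec)

lemma walsh_eq_walsh_averages: "walsh x Y = walsh_averages (sort (slopes x Y))"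
  by (simp add: walsh_def walsh_averages_def sl_def length_slopes upt_rec)

theorem theorem3:
  fixes x Y \<epsilon> :: "nat \<Rightarrow> real" and \<beta>0 \<beta>1 :: real
  assumes x_incr: "\<And>i j. 1 \<le> i \<Longrightarrow> i < j \<Longrightarrow> j \<le> 5 \<Longrightarrow> x i < x j"
    and model: "\<And>i. 1 \<le> i \<Longrightarrow> i \<le> 5 \<Longrightarrow> Y i = \<beta>0 + \<beta>1 * x i + \<epsilon> i"
    and slopes_distinct: "distinct (slopes x Y)"
    and walsh_distinct: "distinct (walsh x Y)"
  shows "(sl x Y 2 \<le> wa x Y 9 \<longleftrightarrow> 2 * sl x Y 2 \<le> sl x Y 1 + sl x Y 9)
       \<and> (wa x Y 47 \<le> sl x Y 9 \<longleftrightarrow> sl x Y 2 + sl x Y 10 \<le> 2 * sl x Y 9)"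
proof -
  define s where "s = sort (slopes x Y)"
  define W where "W = sort (walsh_averages s)"
  have s: "sorted_wrt (<) s" "length s = 10"
    using slopes_distinct by (simp_all add: s_def strict_sorted_iff length_slopes)
  have W: "sorted W" "length W = 55"
    using s(2) by (simp_all add: W_def) (simp add: walsh_averages_def upt_rec)
  have count_W: "length (filter P W) = length (filter P (walsh_averages s))" for P
    by (simp add: W_def filter_sort)
  have "s ! 1 \<le> W ! 8 \<longleftrightarrow> length (filter (\<lambda>u. u < s ! 1) W) \<le> 8"
    using sorted_nth_iff_less_length_filter[of W 8 "\<lambda>u. u < s ! 1"] W by auto
  moreover have "W ! 46 \<le> s ! 8 \<longleftrightarrow> 46 < length (filter (\<lambda>u. u \<le> s ! 8) W)"
    using W by (intro sorted_nth_iff_less_length_filter) auto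
  ultimately show ?thesis
    using walsh_count_below_second[OF s] walsh_count_atmost_ninth[OF s]
    by (simp add: sl_def wa_def walsh_eq_walsh_averages count_W flip: s_def W_def)
qed

end
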